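(* Fix an integer $k\ge2$, and let $\alpha=1+\frac{3}{2k}$, $\beta=\frac{1}{5k}$. Let $A\cup B$ be an instance of $(n,n^\alpha,n^\beta)$-Nice Set Cover (with $n^{1/k}$ an integer and every vertex of $B$ having a neighbor in $A$) with optimum $OPT_{NSC}$. Build a digraph $G$ with vertex layers $V_1,\dots,V_{k+2}$ as follows: $V_1\cup\dots\cup V_{k+1}$ is the generalized butterfly of width $n$ and diameter $k$, i.e. $V_i=[n^{1/k}]^k\times\{i\}$ for $i\in[k+1]$ and there is an edge from $(u,i)$ to $(v,i+1)$ iff $u_j=v_j$ for all $j\ne i$; the layer $V_{k+1}$ is identified (by an arbitrary bijection) with $A$; $V_{k+2}=B$; and each edge of the set-cover instance is directed from $A=V_{k+1}$ to $B=V_{k+2}$. Then $S_k(G)=\Theta(OPT_{NSC}\cdot n^{2/k})$, where the hidden constants depend only on $k$ (for $n$ sufficiently large).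
   Context: An $(a',b',c')$-Nice Set Cover instance is a bipartite graph with parts $A$, $B$, $|A|=a'$, $|B|=b'$, $B$ partitioned into blocks $B_1,\dots,B_{a'}$ of size $b'/a'$, such that any $v\in A$ adjacent to some vertex of $B_i$ is adjacent to all of $B_i$, and each $v\in A$ is adjacent to at most $c'$ blocks; $OPT_{NSC}$ is the minimum number of vertices of $A$ covering $B$. For a digraph $G$, a $k$-TC-spanner is a digraph $H$ on the same vertices whose edges lie in the transitive closure of $G$ such that $d_H(u,v)\le k$ whenever $v$ is reachable from $u$ in $G$; $S_k(G)$ is the minimum number of edges of a $k$-TC-spanner. *)

theory Defs
  imports Complex_Main
begin

definition nice_set_cover ::
  "nat set \<Rightarrow> nat set \<Rightarrow> (nat \<times> nat) set \<Rightarrow> real \<Rightarrow> real \<Rightarrow> real \<Rightarrow> bool" where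
  "nice_set_cover A B E a' b' c' \<longleftrightarrow>
     finite A \<and> finite B \<and> real (card A) = a' \<and> real (card B) = b' \<and> E \<subseteq> A \<times> B \<and>
     (\<exists>Bl :: nat \<Rightarrow> nat set.
        (\<forall>i<card A. Bl i \<subseteq> B \<and> real (card (Bl i)) = b' / a') \<and>
        (\<forall>i<card A. \<forall>j<card A. i \<noteq> j \<longrightarrow> Bl i \<inter> Bl j = {}) \<and>
        (\<Union>i<card A. Bl i) = B \<and>
        (\<forall>v\<in>A. \<forall>i<card A. (\<exists>b\<in>Bl i. (v, b) \<in> E) \<longrightarrow> (\<forall>b\<in>Bl i. (v, b) \<in> E)) \<and>
        (\<forall>v\<in>A. real (card {i. i < card A \<and> (\<exists>b\<in>Bl i. (v, b) \<in> E)}) \<le> c'))"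

definition OPT_NSC :: "nat set \<Rightarrow> nat set \<Rightarrow> (nat \<times> nat) set \<Rightarrow> nat" where
  "OPT_NSC A B E = (LEAST t. \<exists>C. C \<subseteq> A \<and> (\<forall>b\<in>B. \<exists>a\<in>C. (a, b) \<in> E) \<and> card C = t)"

definition is_tc_spanner :: "('v \<times> 'v) set \<Rightarrow> nat \<Rightarrow> ('v \<times> 'v) set \<Rightarrow> bool" where
  "is_tc_spanner G k H \<longleftrightarrow> H \<subseteq> G\<^sup>+ \<and> (\<forall>(u, v)\<in>G\<^sup>*. \<exists>j\<le>k. (u, v) \<in> H ^^ j)"

definition S_k :: "nat \<Rightarrow> ('v \<times> 'v) set \<Rightarrow> nat" where
  "S_k k G = (LEAST t. \<exists>H. finite H \<and> is_tc_spanner G k H \<and> card H = t)"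

text \<open>Vertices: Lay u i is (u,i) with u \<in> [m]^k (coordinates 0..<m, list positions 0..<k standing
 for coordinates 1..k) and layer i \<in> {1..k+1}; BV b is the vertex b of B (layer k+2).\<close>
datatype bvert = Lay "nat list" nat | BV nat

definition coords :: "nat \<Rightarrow> nat \<Rightarrow> nat list set" where
  "coords m k = {u. length u = k \<and> set u \<subseteq> {..<m}}"

text \<open>f identifies layer V_{k+1} (i.e. coords m k) with A; E is the set-cover edge relation.\<close>
definition nsc_butterfly_graph ::
  "nat \<Rightarrow> nat \<Rightarrow> (nat list \<Rightarrow> nat) \<Rightarrow> nat set \<Rightarrow> (nat \<times> nat) set \<Rightarrow> (bvert \<times> bvert) set" where
  "nsc_butterfly_graph m k f B E =
     {(Lay u i, Lay v (Suc i)) | u v i. u \<in> coords m k \<and> v \<in> coords m k \<and> 1 \<le> i \<and> i \<le> k \<and>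
        (\<forall>j<k. j \<noteq> i - 1 \<longrightarrow> u ! j = v ! j)}
     \<union> {(Lay u (Suc k), BV b) | u b. u \<in> coords m k \<and> b \<in> B \<and> (f u, b) \<in> E}"

end

theory Submission
  imports Defs
begin

(* Upper bound: add to G, for an optimal cover C, all "shortcut" edges from layer k-1 to the
   vertices of layer k+1 mapped into C (|C| m^2 edges).  G itself has at most m^k k m + |E| edges,
   and both m^k \<le> OPT m^(1/5) and |E| \<le> m^k m^(1/5) m^(3/2) are O(OPT m^2).

   Lower bound: for a k-TC-spanner H and a vertex x of layer 1, the vertices of layer k+1 that H
   reaches from x in fewer than k steps, completed block by block, form a set cover.  Summing the
   resulting inequality over layer 1 and double counting the edges of H (an edge skipping a
   layer serves at most m^(k-2) such pairs; an edge into B is reached from at most m^(k-1)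
   vertices of layer 1) gives OPT m^2 \<le> 2|H|. *)

lemma relpow_mono_set:
  fixes R S :: "('a \<times> 'a) set"
  assumes "R \<subseteq> S"
  shows "R ^^ n \<subseteq> S ^^ n"
proof (induction n)
  case (Suc n) then show ?case using relcomp_mono[OF Suc assms] by simp
qed simp

lemma relpow_of_trancl_subset:
  assumes "H \<subseteq> G\<^sup>+" and "(p, q) \<in> H ^^ j"
  shows "(p, q) \<in> G\<^sup>*"
proof -
  have "(p, q) \<in> (G\<^sup>+) ^^ j" using relpow_mono_set[OF assms(1)] assms(2) by blast
  then have "(p, q) \<in> (G\<^sup>+)\<^sup>*" by (rule relpow_imp_rtrancl)
  then show ?thesis by simp
qed

lemma OPT_NSC_le:
  assumes "C \<subseteq> A" and "\<forall>b\<in>B. \<exists>a\<in>C. (a, b) \<in> E"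
  shows "OPT_NSC A B E \<le> card C"
  unfolding OPT_NSC_def using assms by (auto intro: Least_le)

lemma OPT_NSC_attained:
  assumes "\<forall>b\<in>B. \<exists>a\<in>A. (a, b) \<in> E"
  obtains C where "C \<subseteq> A" "\<forall>b\<in>B. \<exists>a\<in>C. (a, b) \<in> E" "card C = OPT_NSC A B E"
proof -
  let ?P = "\<lambda>t. \<exists>C. C \<subseteq> A \<and> (\<forall>b\<in>B. \<exists>a\<in>C. (a, b) \<in> E) \<and> card C = t"
  have "?P (card A)" using assms by blast
  then have "?P (Least ?P)" by (rule LeastI)
  then show thesis using that unfolding OPT_NSC_def by blast
qed

lemma S_k_le:
  assumes "finite H" and "is_tc_spanner G k H"
  shows "S_k k G \<le> card H"
  unfolding S_k_def using assms by (auto intro: Least_le)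

lemma S_k_attained:
  assumes "finite H" and "is_tc_spanner G k H"
  obtains H0 where "finite H0" "is_tc_spanner G k H0" "card H0 = S_k k G"
proof -
  let ?P = "\<lambda>t. \<exists>H. finite H \<and> is_tc_spanner G k H \<and> card H = t"
  have "?P (card H)" using assms by blast
  then have "?P (Least ?P)" by (rule LeastI)
  then show thesis using that unfolding S_k_def by blast
qed

locale block_cover =
  fixes A B :: "nat set" and E :: "(nat \<times> nat) set"
    and Bl :: "nat \<Rightarrow> nat set" and N s :: nat
  assumes edges_sub: "E \<subseteq> A \<times> B"
    and finite_A: "finite A"
    and block_sub: "i < N \<Longrightarrow> Bl i \<subseteq> B"
    and block_card: "i < N \<Longrightarrow> card (Bl i) = s"
    and block_size_pos: "s > 0"
    and blocks_disjoint: "i < N \<Longrightarrow> j < N \<Longrightarrow> i \<noteq> j \<Longrightarrow> Bl i \<inter> Bl j = {}"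
    and blocks_cover: "(\<Union>i<N. Bl i) = B"
    and all_or_nothing: "(a, b) \<in> E \<Longrightarrow> i < N \<Longrightarrow> b \<in> Bl i \<Longrightarrow> b' \<in> Bl i \<Longrightarrow> (a, b') \<in> E"
    and every_covered: "\<forall>b\<in>B. \<exists>a\<in>A. (a, b) \<in> E"
begin

definition blocks_of :: "nat \<Rightarrow> nat set" where
  "blocks_of a = {i. i < N \<and> (\<exists>b\<in>Bl i. (a, b) \<in> E)}"

lemma finite_block: "i < N \<Longrightarrow> finite (Bl i)"
  using block_card block_size_pos by (metis card.infinite less_not_refl2)

lemma finite_B: "finite B"
  using blocks_cover finite_block by (metis finite_UN_I finite_lessThan lessThan_iff)

lemma finite_E: "finite E"
  using edges_sub finite_A finite_B by (meson finite_SigmaI finite_subset)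

lemma block_nonempty: "i < N \<Longrightarrow> \<exists>b. b \<in> Bl i"
  using block_card block_size_pos by (metis card.empty ex_in_conv less_not_refl2)

text \<open>Any partial cover D can be completed to a cover by adding one vertex for every block it misses;
  the missed blocks lie entirely in the uncovered part of B, which therefore pays s for each
  added vertex.\<close>
lemma cover_completion:
  assumes D: "D \<subseteq> A" "finite D"
  shows "OPT_NSC A B E * s \<le> card D * s + card {b \<in> B. \<not> (\<exists>a\<in>D. (a, b) \<in> E)}"
proof -
  define U where "U = {i. i < N \<and> \<not> (\<exists>a\<in>D. \<exists>b\<in>Bl i. (a, b) \<in> E)}"
  have "(\<Union>i\<in>U. Bl i) \<subseteq> {b \<in> B. \<not> (\<exists>a\<in>D. (a, b) \<in> E)}"
    unfolding U_def using block_sub by blast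
  then have "card (\<Union>i\<in>U. Bl i) \<le> card {b \<in> B. \<not> (\<exists>a\<in>D. (a, b) \<in> E)}"
    by (rule card_mono[rotated]) (simp add: finite_B)
  moreover have "card (\<Union>i\<in>U. Bl i) = card U * s"
    by (subst card_UN_disjoint) (auto simp: U_def finite_block blocks_disjoint block_card)
  ultimately have uncovered: "card U * s \<le> card {b \<in> B. \<not> (\<exists>a\<in>D. (a, b) \<in> E)}" by simp
  have "\<exists>a\<in>A. \<forall>b\<in>Bl i. (a, b) \<in> E" if i: "i < N" for i
  proof -
    obtain b where b: "b \<in> Bl i" using block_nonempty[OF i] by blast
    then obtain a where "a \<in> A" "(a, b) \<in> E" using every_covered block_sub i by blast
    then show ?thesis using all_or_nothing i b by blast
  qed
  then obtain g where g: "\<And>i. i < N \<Longrightarrow> g i \<in> A \<and> (\<forall>b\<in>Bl i. (g i, b) \<in> E)" by metis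
  have "\<exists>a\<in>D \<union> g ` U. (a, b) \<in> E" if b: "b \<in> B" for b
  proof -
    obtain i where i: "i < N" "b \<in> Bl i" using b blocks_cover by blast
    show ?thesis
    proof (cases "i \<in> U")
      case True then show ?thesis using g i by blast
    next
      case False then show ?thesis using i all_or_nothing unfolding U_def by blast
    qed
  qed
  then have "OPT_NSC A B E \<le> card (D \<union> g ` U)"
    using D g by (intro OPT_NSC_le) (auto simp: U_def)
  also have "\<dots> \<le> card D + card U"
    using card_Un_le[of D "g ` U"] card_image_le[of U g] by (simp add: U_def)
  finally have "OPT_NSC A B E * s \<le> card D * s + card U * s"
    by (metis add_mult_distrib mult_le_mono1)
  then show ?thesis using uncovered by linarith
qed

lemma blocks_le_OPT_degree:
  assumes degree: "\<And>a. a \<in> A \<Longrightarrow> real (card (blocks_of a)) \<le> q"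
  shows "real N \<le> real (OPT_NSC A B E) * q"
proof -
  obtain C where C: "C \<subseteq> A" "\<forall>b\<in>B. \<exists>a\<in>C. (a, b) \<in> E" "card C = OPT_NSC A B E"
    using OPT_NSC_attained every_covered by blast
  have finite_C: "finite C" using C(1) finite_A finite_subset by blast
  have "{..<N} \<subseteq> (\<Union>a\<in>C. blocks_of a)"
  proof
    fix i assume "i \<in> {..<N}"
    moreover obtain b where "b \<in> Bl i" using block_nonempty calculation by blast
    moreover obtain a where "a \<in> C" "(a, b) \<in> E" using C(2) block_sub calculation by blast
    ultimately show "i \<in> (\<Union>a\<in>C. blocks_of a)" unfolding blocks_of_def by blast
  qed
  then have "N \<le> card (\<Union>a\<in>C. blocks_of a)"
    using card_mono[of "\<Union>a\<in>C. blocks_of a" "{..<N}"] finite_C by (simp add: blocks_of_def)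
  also have "\<dots> \<le> (\<Sum>a\<in>C. card (blocks_of a))" by (rule card_UN_le[OF finite_C])
  finally have "real N \<le> (\<Sum>a\<in>C. real (card (blocks_of a)))" by (metis of_nat_le_iff of_nat_sum)
  also have "\<dots> \<le> real (card C) * q" using degree C(1) by (intro sum_bounded_above) blast
  finally show ?thesis using C(3) by simp
qed

lemma card_edges_le:
  assumes degree: "\<And>a. a \<in> A \<Longrightarrow> real (card (blocks_of a)) \<le> q"
  shows "real (card E) \<le> real (card A) * q * real s"
proof -
  have neighbours: "card (E `` {a}) \<le> card (blocks_of a) * s" for a
  proof -
    have "E `` {a} \<subseteq> (\<Union>i\<in>blocks_of a. Bl i)"
      using edges_sub blocks_cover unfolding blocks_of_def by blast
    then have "card (E `` {a}) \<le> card (\<Union>i\<in>blocks_of a. Bl i)"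
      by (rule card_mono[rotated]) (auto simp: blocks_of_def finite_block)
    also have "\<dots> \<le> (\<Sum>i\<in>blocks_of a. card (Bl i))" by (rule card_UN_le) (simp add: blocks_of_def)
    also have "\<dots> = card (blocks_of a) * s" by (simp add: blocks_of_def block_card)
    finally show ?thesis .
  qed
  have "E \<subseteq> Sigma A (\<lambda>a. E `` {a})" using edges_sub by auto
  then have "card E \<le> (\<Sum>a\<in>A. card (E `` {a}))"
    using card_mono[of "Sigma A (\<lambda>a. E `` {a})" E] finite_A finite_E by simp
  then have "real (card E) \<le> (\<Sum>a\<in>A. real (card (E `` {a})))" by (metis of_nat_le_iff of_nat_sum)
  also have "\<dots> \<le> real (card A) * (q * real s)"
  proof (rule sum_bounded_above)
    fix a assume a: "a \<in> A"
    have "real (card (E `` {a})) \<le> real (card (blocks_of a)) * real s"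
      using neighbours[of a] by (metis of_nat_le_iff of_nat_mult)
    also have "\<dots> \<le> q * real s" using degree[OF a] by (intro mult_right_mono) auto
    finally show "real (card (E `` {a})) \<le> q * real s" .
  qed
  finally show ?thesis by (simp add: mult.assoc)
qed

lemma blocks_and_edges_le_OPT:
  assumes degree: "\<And>a. a \<in> A \<Longrightarrow> real (card (blocks_of a)) \<le> q"
    and q: "0 \<le> q" "q \<le> M" "q * q * real s \<le> M ^ 2" and card_A: "card A = N"
  shows "real N * M \<le> real (OPT_NSC A B E) * M ^ 2"
    and "real (card E) \<le> real (OPT_NSC A B E) * M ^ 2"
proof -
  let ?OPT = "real (OPT_NSC A B E)"
  have blocks: "real N \<le> ?OPT * q" by (rule blocks_le_OPT_degree[OF degree])
  have "real N * M \<le> (?OPT * q) * M" using blocks q by (intro mult_right_mono) auto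
  also have "\<dots> \<le> (?OPT * M) * M" using q by (intro mult_right_mono mult_left_mono) auto
  finally show "real N * M \<le> ?OPT * M ^ 2" by (simp add: power2_eq_square mult.assoc)
  have "real (card E) \<le> real N * q * real s" using card_edges_le[OF degree] card_A by simp
  also have "\<dots> \<le> (?OPT * q) * q * real s" using blocks q by (intro mult_right_mono) auto
  also have "\<dots> = ?OPT * (q * q * real s)" by (simp add: mult.assoc)
  also have "\<dots> \<le> ?OPT * M ^ 2" using q by (intro mult_left_mono) auto
  finally show "real (card E) \<le> ?OPT * M ^ 2" .
qed

end

lemma coordsD: "u \<in> coords m k \<Longrightarrow> length u = k \<and> set u \<subseteq> {..<m}"
  unfolding coords_def by simp

lemma coords_eq_lists: "coords m k = {xs. set xs \<subseteq> {..<m} \<and> length xs = k}"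
  unfolding coords_def by auto

lemma card_coords: "card (coords m k) = m ^ k"
  unfolding coords_eq_lists by (simp add: card_lists_length_eq)

lemma finite_coords: "finite (coords m k)"
  unfolding coords_eq_lists by (simp add: finite_lists_length_eq)

lemma coords_nth_less: "u \<in> coords m k \<Longrightarrow> t < k \<Longrightarrow> u ! t < m"
  using coordsD by (metis lessThan_iff nth_mem subsetD)

text \<open>Coordinate vectors that agree with a fixed v outside the window of positions a..b-1 are
  determined by that window, so there are at most m^(b-a) of them.\<close>
lemma card_agree_outside_window:
  assumes m: "m \<ge> 1" and S: "S \<subseteq> coords m k"
    and agree: "\<And>x t. x \<in> S \<Longrightarrow> t < k \<Longrightarrow> t < a \<or> b \<le> t \<Longrightarrow> x ! t = v ! t"
  shows "card S \<le> m ^ (b - a)"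
proof -
  let ?window = "\<lambda>x. take (b - a) (drop a x)"
  have "inj_on ?window S"
  proof (rule inj_onI)
    fix x y assume xy: "x \<in> S" "y \<in> S" "?window x = ?window y"
    have len: "length x = k" "length y = k" using xy S coordsD by blast+
    show "x = y"
    proof (rule nth_equalityI)
      fix t assume "t < length x"
      then have t: "t < k" using len by simp
      show "x ! t = y ! t"
      proof (cases "t < a \<or> b \<le> t")
        case True then show ?thesis using agree xy t by metis
      next
        case False
        then have "?window x ! (t - a) = ?window y ! (t - a)" using xy by simp
        moreover have "t - a < b - a" "a + (t - a) = t" using False by auto
        moreover have "a \<le> length x" "a \<le> length y" using False len t by auto
        ultimately show ?thesis by (simp add: nth_take nth_drop)
      qed
    qed (use len in simp)
  qed
  then have "card S = card (?window ` S)" by (simp add: card_image)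
  also have "\<dots> \<le> card {xs. set xs \<subseteq> {..<m} \<and> length xs = min (b - a) (k - a)}"
  proof (rule card_mono)
    show "?window ` S \<subseteq> {xs. set xs \<subseteq> {..<m} \<and> length xs = min (b - a) (k - a)}"
      using S coordsD by (fastforce dest: in_set_takeD in_set_dropD)
  qed (simp add: finite_lists_length_eq)
  also have "\<dots> = m ^ min (b - a) (k - a)" by (simp add: card_lists_length_eq)
  also have "\<dots> \<le> m ^ (b - a)" using m by (simp add: power_increasing)
  finally show ?thesis .
qed

locale butterfly =
  fixes m k :: nat and f :: "nat list \<Rightarrow> nat" and B :: "nat set" and E :: "(nat \<times> nat) set"
begin

abbreviation G :: "(bvert \<times> bvert) set" where
  "G \<equiv> nsc_butterfly_graph m k f B E"

fun layer :: "bvert \<Rightarrow> nat" where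
  "layer (Lay u i) = i"
| "layer (BV b) = Suc (Suc k)"

definition butterfly_edges :: "(bvert \<times> bvert) set" where
  "butterfly_edges = {(Lay u i, Lay v (Suc i)) | u v i. u \<in> coords m k \<and> v \<in> coords m k \<and>
     1 \<le> i \<and> i \<le> k \<and> (\<forall>j<k. j \<noteq> i - 1 \<longrightarrow> u ! j = v ! j)}"

definition cover_edges :: "(bvert \<times> bvert) set" where
  "cover_edges = {(Lay u (Suc k), BV b) | u b. u \<in> coords m k \<and> b \<in> B \<and> (f u, b) \<in> E}"

lemma G_eq: "G = butterfly_edges \<union> cover_edges"
  unfolding nsc_butterfly_graph_def butterfly_edges_def cover_edges_def by simp

lemma G_cases:
  assumes "(p, q) \<in> G"
  obtains (butterfly) u v i where "p = Lay u i" "q = Lay v (Suc i)" "u \<in> coords m k" "v \<in> coords m k"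
      "1 \<le> i" "i \<le> k" "\<forall>j<k. j \<noteq> i - 1 \<longrightarrow> u ! j = v ! j"
  | (cover) u b where "p = Lay u (Suc k)" "q = BV b" "u \<in> coords m k" "b \<in> B" "(f u, b) \<in> E"
  using assms unfolding nsc_butterfly_graph_def by blast

lemma layer_edge: "(p, q) \<in> G \<Longrightarrow> layer q = Suc (layer p)"
  by (erule G_cases) auto

lemma layer_relpow: "(p, q) \<in> G ^^ n \<Longrightarrow> layer q = layer p + n"
proof (induction n arbitrary: q)
  case (Suc n)
  then obtain r where "(p, r) \<in> G ^^ n" "(r, q) \<in> G" by (meson relpow_Suc_E)
  then show ?case using Suc.IH layer_edge by fastforce
qed simp

lemma layer_rtrancl: "(p, q) \<in> G\<^sup>* \<Longrightarrow> layer p \<le> layer q"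
  by (metis rtrancl_power layer_relpow le_add1)

lemma layer_trancl: "(p, q) \<in> G\<^sup>+ \<Longrightarrow> layer p < layer q"
  by (metis trancl_power layer_relpow less_add_same_cancel1)

lemma layer_edge_le: "(p, q) \<in> G \<Longrightarrow> layer q \<le> Suc (Suc k)"
  by (erule G_cases) auto

text \<open>A butterfly path from layer i to layer j can only change the coordinates i, ..., j-1
  (positions i-1, ..., j-2 of the list).\<close>
lemma butterfly_path_agree:
  "(Lay u i, Lay v j) \<in> G ^^ n \<Longrightarrow> j = i + n \<and>
   (0 < n \<longrightarrow> u \<in> coords m k \<and> v \<in> coords m k \<and> 1 \<le> i \<and> j \<le> Suc k) \<and>
   (\<forall>t<k. t < i - 1 \<or> j - 1 \<le> t \<longrightarrow> u ! t = v ! t)"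
proof (induction n arbitrary: v j)
  case (Suc n)
  then obtain r where r1: "(Lay u i, r) \<in> G ^^ n" and r2: "(r, Lay v j) \<in> G" by (meson relpow_Suc_E)
  from r2 obtain v' j' where r: "r = Lay v' j'" "j = Suc j'" "v' \<in> coords m k" "v \<in> coords m k"
    "1 \<le> j'" "j' \<le> k" "\<forall>t<k. t \<noteq> j' - 1 \<longrightarrow> v' ! t = v ! t"
    by (cases rule: G_cases) auto
  have IH: "j' = i + n" "0 < n \<longrightarrow> u \<in> coords m k \<and> 1 \<le> i"
    "\<forall>t<k. t < i - 1 \<or> j' - 1 \<le> t \<longrightarrow> u ! t = v' ! t"
    using Suc.IH r1 r(1) by blast+
  have "u \<in> coords m k \<and> 1 \<le> i" using IH r r1 by (cases n) auto
  then show ?case using IH r by auto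
qed simp

lemma butterfly_path_exists:
  "u \<in> coords m k \<Longrightarrow> v \<in> coords m k \<Longrightarrow> 1 \<le> i \<Longrightarrow> i + d \<le> Suc k \<Longrightarrow>
   (\<forall>t<k. t < i - 1 \<or> i + d - 1 \<le> t \<longrightarrow> u ! t = v ! t) \<Longrightarrow>
   (Lay u i, Lay v (i + d)) \<in> butterfly_edges ^^ d"
proof (induction d arbitrary: v)
  case 0
  then have "u = v" using coordsD by (intro nth_equalityI) fastforce+
  then show ?case by simp
next
  case (Suc d)
  define p where "p = i + d - 1"
  define v' where "v' = v[p := u ! p]"
  have p: "p < k" using Suc.prems unfolding p_def by simp
  have len: "length v = k" using Suc.prems coordsD by auto
  have v': "v' \<in> coords m k"
    using Suc.prems(2) coords_nth_less[OF Suc.prems(1) p] unfolding v'_def coords_def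
    by (auto dest: subsetD[OF set_update_subset_insert])
  have "\<forall>t<k. t < i - 1 \<or> i + d - 1 \<le> t \<longrightarrow> u ! t = v' ! t"
    using Suc.prems(5) len unfolding v'_def p_def by (auto simp: nth_list_update)
  then have "(Lay u i, Lay v' (i + d)) \<in> butterfly_edges ^^ d"
    using Suc.IH[OF Suc.prems(1) v' Suc.prems(3)] Suc.prems(4) by simp
  moreover have "(Lay v' (i + d), Lay v (Suc (i + d))) \<in> butterfly_edges"
    unfolding butterfly_edges_def using v' Suc.prems unfolding v'_def p_def by auto
  ultimately show ?case by auto
qed

lemma butterfly_full_reach:
  assumes "x \<in> coords m k" "w \<in> coords m k"
  shows "(Lay x 1, Lay w (Suc k)) \<in> G\<^sup>*"
proof -
  have "(Lay x 1, Lay w (1 + k)) \<in> butterfly_edges ^^ k"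
    using butterfly_path_exists[OF assms, of 1 k] by simp
  then have "(Lay x 1, Lay w (Suc k)) \<in> G ^^ k" using relpow_mono_set[of butterfly_edges G k] G_eq by auto
  then show ?thesis by (rule relpow_imp_rtrancl)
qed

lemma reach_coords:
  assumes "x \<in> coords m k" "(Lay x i, Lay v j) \<in> G\<^sup>*"
  shows "v \<in> coords m k"
proof -
  obtain n where n: "(Lay x i, Lay v j) \<in> G ^^ n" using assms(2) by (auto simp: rtrancl_power)
  then show ?thesis using assms(1) butterfly_path_agree[OF n] by (cases n) auto
qed

lemma reach_B_from_top:
  assumes "(Lay v (Suc k), BV b) \<in> G\<^sup>+"
  shows "v \<in> coords m k \<and> b \<in> B \<and> (f v, b) \<in> E"
proof -
  obtain n where n: "(Lay v (Suc k), BV b) \<in> G ^^ n" using assms by (auto simp: trancl_power)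
  then have "n = 1" using layer_relpow by fastforce
  then have "(Lay v (Suc k), BV b) \<in> G" using n by simp
  then show ?thesis by (cases rule: G_cases) auto
qed

lemma card_ancestors:
  assumes "m \<ge> 1"
  shows "card {x \<in> coords m k. (Lay x 1, Lay v j) \<in> G\<^sup>*} \<le> m ^ (j - 1)"
proof -
  have "card {x \<in> coords m k. (Lay x 1, Lay v j) \<in> G\<^sup>*} \<le> m ^ (j - 1 - 0)"
  proof (rule card_agree_outside_window[OF assms])
    fix x t assume "x \<in> {x \<in> coords m k. (Lay x 1, Lay v j) \<in> G\<^sup>*}" "t < k" "t < 0 \<or> j - 1 \<le> t"
    then show "x ! t = v ! t" using butterfly_path_agree by (auto simp: rtrancl_power)
  qed auto
  then show ?thesis by simp
qed

lemma card_descendants: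
  assumes "m \<ge> 1"
  shows "card {w \<in> coords m k. (Lay v j, Lay w (Suc k)) \<in> G\<^sup>*} \<le> m ^ (Suc k - j)"
proof -
  have "card {w \<in> coords m k. (Lay v j, Lay w (Suc k)) \<in> G\<^sup>*} \<le> m ^ (k - (j - 1))"
  proof (rule card_agree_outside_window[OF assms])
    fix w t assume "w \<in> {w \<in> coords m k. (Lay v j, Lay w (Suc k)) \<in> G\<^sup>*}" "t < k" "t < j - 1 \<or> k \<le> t"
    then show "w ! t = v ! t" using butterfly_path_agree by (fastforce simp: rtrancl_power)
  qed auto
  also have "\<dots> \<le> m ^ (Suc k - j)" using assms by (intro power_increasing) auto
  finally show ?thesis .
qed

lemma long_edge_on_path:
  assumes HG: "H \<subseteq> G\<^sup>+"
  shows "(s, t) \<in> H ^^ j \<Longrightarrow> layer s + j < layer t \<Longrightarrow>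
     \<exists>p q. (p, q) \<in> H \<and> layer p + 2 \<le> layer q \<and> (s, p) \<in> G\<^sup>* \<and> (q, t) \<in> G\<^sup>*"
proof (induction j arbitrary: t)
  case (Suc j)
  then obtain r where r: "(s, r) \<in> H ^^ j" "(r, t) \<in> H" by (meson relpow_Suc_E)
  have sr: "(s, r) \<in> G\<^sup>*" by (rule relpow_of_trancl_subset[OF HG r(1)])
  have rt: "(r, t) \<in> G\<^sup>+" using r(2) HG by auto
  show ?case
  proof (cases "layer r + 2 \<le> layer t")
    case True then show ?thesis using r(2) sr by blast
  next
    case False
    then have "layer s + j < layer r" using Suc.prems by simp
    then show ?thesis using Suc.IH[OF r(1)] rt by (meson rtrancl_trans trancl_into_rtrancl)
  qed
qed simp

end

locale butterfly_spanner = butterfly +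
  fixes H :: "(bvert \<times> bvert) set"
  assumes spanner: "is_tc_spanner G k H"
    and finite_H: "finite H"
begin

lemma H_sub_trancl: "H \<subseteq> G\<^sup>+"
  using spanner unfolding is_tc_spanner_def by blast

lemma H_spans: "(u, v) \<in> G\<^sup>* \<Longrightarrow> \<exists>j\<le>k. (u, v) \<in> H ^^ j"
  using spanner unfolding is_tc_spanner_def by blast

definition short_reach :: "nat list \<Rightarrow> nat list set" where
  "short_reach x = {w \<in> coords m k. \<exists>j<k. (Lay x 1, Lay w (Suc k)) \<in> H ^^ j}"

definition uncovered :: "nat list \<Rightarrow> nat set" where
  "uncovered x = {b \<in> B. \<not> (\<exists>w\<in>short_reach x. (f w, b) \<in> E)}"

definition H_into_B :: "bvert \<Rightarrow> nat set" where
  "H_into_B z = {b. (z, BV b) \<in> H}"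

definition lower_layers :: "bvert set" where
  "lower_layers = (\<lambda>(v, j). Lay v j) ` (coords m k \<times> {..k})"

lemma finite_lower_layers: "finite lower_layers"
  unfolding lower_layers_def by (simp add: finite_coords)

lemma finite_H_into_B: "finite (H_into_B z)"
proof -
  have "H_into_B z = (\<lambda>b. (z, BV b)) -` H" unfolding H_into_B_def by auto
  then show ?thesis using finite_vimageI[OF finite_H, of "\<lambda>b. (z, BV b)"] by (simp add: inj_def)
qed

text \<open>Distinct vertices have disjoint sets of H-edges into B.\<close>
lemma sum_H_into_B_le: "(\<Sum>z\<in>Z. card (H_into_B z)) \<le> card H" if "finite Z" for Z
proof -
  have "(\<Sum>z\<in>Z. card (H_into_B z)) = card (Sigma Z H_into_B)"
    using that finite_H_into_B by simp
  also have "\<dots> \<le> card H"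
    by (rule card_inj_on_le[of "\<lambda>(z, b). (z, BV b)"]) (auto simp: inj_on_def H_into_B_def finite_H)
  finally show ?thesis .
qed

lemma uncovered_entered_from_below:
  assumes x: "x \<in> coords m k" and in_edge: "\<forall>b\<in>B. \<exists>w\<in>coords m k. (f w, b) \<in> E"
  shows "uncovered x \<subseteq> (\<Union>z\<in>{z \<in> lower_layers. (Lay x 1, z) \<in> G\<^sup>*}. H_into_B z)"
proof
  fix b assume "b \<in> uncovered x"
  then have b: "b \<in> B" and not_short: "\<not> (\<exists>w\<in>short_reach x. (f w, b) \<in> E)"
    unfolding uncovered_def by auto
  obtain w where w: "w \<in> coords m k" "(f w, b) \<in> E" using in_edge b by blast
  have "(Lay w (Suc k), BV b) \<in> G" using w b G_eq unfolding cover_edges_def by auto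
  then have "(Lay x 1, BV b) \<in> G\<^sup>*" using butterfly_full_reach[OF x w(1)] by simp
  then obtain j where j: "j \<le> k" "(Lay x 1, BV b) \<in> H ^^ j" using H_spans by blast
  then obtain j' where j': "j = Suc j'" by (cases j) auto
  with j obtain z where z: "(Lay x 1, z) \<in> H ^^ j'" "(z, BV b) \<in> H" by (meson relpow_Suc_E)
  have xz: "(Lay x 1, z) \<in> G\<^sup>*" by (rule relpow_of_trancl_subset[OF H_sub_trancl z(1)])
  have zb: "(z, BV b) \<in> G\<^sup>+" using z(2) H_sub_trancl by auto
  obtain v i where v: "z = Lay v i" "i \<le> Suc k" using layer_trancl[OF zb] by (cases z) auto
  have v_coords: "v \<in> coords m k" using reach_coords[OF x] xz v by simp
  have "i \<noteq> Suc k"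
  proof
    assume "i = Suc k"
    then have "(Lay x 1, Lay v (Suc k)) \<in> H ^^ j'" "j' < k" using z(1) v j j' by auto
    then have "v \<in> short_reach x" using v_coords unfolding short_reach_def by blast
    moreover have "(f v, b) \<in> E" using reach_B_from_top zb v \<open>i = Suc k\<close> by simp
    ultimately show False using not_short by blast
  qed
  then have "z \<in> lower_layers" unfolding lower_layers_def using v v_coords by auto
  then show "b \<in> (\<Union>z\<in>{z \<in> lower_layers. (Lay x 1, z) \<in> G\<^sup>*}. H_into_B z)"
    using xz z(2) unfolding H_into_B_def by auto
qed

text \<open>Summed over layer 1: every H-edge into B is counted once per ancestor of its tail.\<close>
lemma sum_uncovered_le:
  assumes m: "m \<ge> 1" and in_edge: "\<forall>b\<in>B. \<exists>w\<in>coords m k. (f w, b) \<in> E"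
  shows "(\<Sum>x\<in>coords m k. card (uncovered x)) \<le> m ^ (k - 1) * card H"
proof -
  let ?Z = lower_layers and ?reach = "\<lambda>x z. (Lay x 1, z) \<in> G\<^sup>*"
  have "(\<Sum>x\<in>coords m k. card (uncovered x))
        \<le> (\<Sum>x\<in>coords m k. \<Sum>z\<in>{z \<in> ?Z. ?reach x z}. card (H_into_B z))"
  proof (rule sum_mono)
    fix x assume x: "x \<in> coords m k"
    have "card (uncovered x)
          \<le> card (\<Union>z\<in>{z \<in> ?Z. ?reach x z}. H_into_B z)"
      by (rule card_mono[OF _ uncovered_entered_from_below[OF x in_edge]])
         (simp add: finite_lower_layers finite_H_into_B)
    also have "\<dots> \<le> (\<Sum>z\<in>{z \<in> ?Z. ?reach x z}. card (H_into_B z))"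
      by (rule card_UN_le) (simp add: finite_lower_layers)
    finally show "card (uncovered x)
          \<le> (\<Sum>z\<in>{z \<in> ?Z. ?reach x z}. card (H_into_B z))" .
  qed
  also have "\<dots> = (\<Sum>z\<in>?Z. card {x \<in> coords m k. ?reach x z} * card (H_into_B z))"
    by (simp add: sum.swap_restrict[OF finite_coords finite_lower_layers])
  also have "\<dots> \<le> (\<Sum>z\<in>?Z. m ^ (k - 1) * card (H_into_B z))"
  proof (rule sum_mono)
    fix z assume "z \<in> ?Z"
    then obtain v j where z: "z = Lay v j" "j \<le> k" unfolding lower_layers_def by auto
    have "card {x \<in> coords m k. ?reach x z} \<le> m ^ (j - 1)" using card_ancestors[OF m] z by simp
    also have "\<dots> \<le> m ^ (k - 1)" using m z by (intro power_increasing) auto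
    finally show "card {x \<in> coords m k. ?reach x z} * card (H_into_B z) \<le> m ^ (k - 1) * card (H_into_B z)"
      by simp
  qed
  also have "\<dots> \<le> m ^ (k - 1) * card H"
    using sum_H_into_B_le[OF finite_lower_layers] by (simp add: sum_distrib_left[symmetric])
  finally show ?thesis .
qed

text \<open>Each pair (x, w) with w \<in> short_reach x is served by an H-edge skipping a layer; such an edge
  serves at most m^(k-2) pairs.\<close>
lemma sum_short_reach_le:
  assumes m: "m \<ge> 1"
  shows "(\<Sum>x\<in>coords m k. card (short_reach x)) \<le> m ^ (k - 2) * card H"
proof -
  define L where "L = {e \<in> H. layer (fst e) + 2 \<le> layer (snd e)}"
  define anc where "anc p = {x \<in> coords m k. (Lay x 1, p) \<in> G\<^sup>*}" for p
  define desc where "desc q = {w \<in> coords m k. (q, Lay w (Suc k)) \<in> G\<^sup>*}" for q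
  have finite_L: "finite L" unfolding L_def using finite_H by simp
  have served: "Sigma (coords m k) short_reach \<subseteq> (\<Union>(p, q)\<in>L. anc p \<times> desc q)"
  proof safe
    fix x w assume x: "x \<in> coords m k" and w: "w \<in> short_reach x"
    then obtain j where j: "j < k" "w \<in> coords m k" "(Lay x 1, Lay w (Suc k)) \<in> H ^^ j"
      unfolding short_reach_def by auto
    then obtain p q where "(p, q) \<in> H" "layer p + 2 \<le> layer q"
      "(Lay x 1, p) \<in> G\<^sup>*" "(q, Lay w (Suc k)) \<in> G\<^sup>*"
      using long_edge_on_path[OF H_sub_trancl j(3)] by auto
    then show "(x, w) \<in> (\<Union>(p, q)\<in>L. anc p \<times> desc q)"
      unfolding L_def anc_def desc_def using x j by force
  qed
  have serves_few: "card (anc p \<times> desc q) \<le> m ^ (k - 2)" if pq: "(p, q) \<in> L" for p q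
  proof (cases "anc p = {} \<or> desc q = {}")
    case False
    then obtain x w where x: "x \<in> anc p" and w: "w \<in> desc q" by blast
    have layers: "1 \<le> layer p" "layer q \<le> Suc k" "layer p + 2 \<le> layer q"
      using layer_rtrancl x w pq unfolding anc_def desc_def L_def by fastforce+
    obtain u i v j where p: "p = Lay u i" and q: "q = Lay v j" using layers by (cases p; cases q) auto
    have "card (anc p \<times> desc q) \<le> m ^ (i - 1) * m ^ (Suc k - j)"
      unfolding card_cartesian_product anc_def desc_def p q
      using card_ancestors[OF m] card_descendants[OF m] by (intro mult_le_mono)
    also have "\<dots> \<le> m ^ (k - 2)"
      unfolding power_add[symmetric] using m layers p q by (intro power_increasing) auto
    finally show ?thesis .
  qed auto
  have "(\<Sum>x\<in>coords m k. card (short_reach x)) = card (Sigma (coords m k) short_reach)"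
    by (simp add: finite_coords short_reach_def)
  also have "\<dots> \<le> card (\<Union>(p, q)\<in>L. anc p \<times> desc q)"
    by (rule card_mono[OF _ served]) (auto simp: finite_L anc_def desc_def finite_coords)
  also have "\<dots> \<le> (\<Sum>(p, q)\<in>L. card (anc p \<times> desc q))"
    using card_UN_le[OF finite_L, of "\<lambda>(p, q). anc p \<times> desc q"] by (simp add: case_prod_beta')
  also have "\<dots> \<le> (\<Sum>(p, q)\<in>L. m ^ (k - 2))" using serves_few by (intro sum_mono) auto
  also have "\<dots> \<le> m ^ (k - 2) * card H"
    using card_mono[OF finite_H] by (simp add: L_def)
  finally show ?thesis .
qed

lemma cover_per_vertex:
  assumes cover: "block_cover A B E Bl N s" and f_image: "f ` coords m k = A"
  shows "OPT_NSC A B E * s \<le> card (short_reach x) * s + card (uncovered x)"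
proof -
  interpret block_cover A B E Bl N s by (rule cover)
  have finite: "finite (short_reach x)" unfolding short_reach_def by (simp add: finite_coords)
  have "f ` short_reach x \<subseteq> A" using f_image unfolding short_reach_def by auto
  then have "OPT_NSC A B E * s \<le> card (f ` short_reach x) * s + card (uncovered x)"
    using cover_completion[of "f ` short_reach x"] finite unfolding uncovered_def by simp
  also have "\<dots> \<le> card (short_reach x) * s + card (uncovered x)" by (simp add: card_image_le finite)
  finally show ?thesis .
qed

text \<open>Lower bound: summing cover_per_vertex over layer 1 and using the two counting lemmas gives
  m^k OPT s \<le> m^(k-2) s |H| + m^(k-1) |H| \<le> 2 m^(k-2) s |H|, i.e. OPT * m^2 \<le> 2 |H|.\<close>
theorem spanner_lower_bound:
  assumes cover: "block_cover A B E Bl N s" and f: "bij_betw f (coords m k) A"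
    and m: "m \<ge> 1" and k: "k \<ge> 2" and m_le_s: "m \<le> s"
  shows "OPT_NSC A B E * m ^ 2 \<le> 2 * card H"
proof -
  have f_image: "f ` coords m k = A" using f by (simp add: bij_betw_def)
  have in_edge: "\<forall>b\<in>B. \<exists>w\<in>coords m k. (f w, b) \<in> E"
    using block_cover.every_covered[OF cover] f_image by blast
  have "k - 1 = Suc (k - 2)" "k = k - 2 + 2" using k by simp_all
  then have powers: "m ^ (k - 1) = m ^ (k - 2) * m" "m ^ k = m ^ (k - 2) * m ^ 2"
    by (metis power_Suc2, metis power_add)
  let ?c = "m ^ (k - 2) * s"
  have "?c * (OPT_NSC A B E * m ^ 2) = (\<Sum>x\<in>coords m k. OPT_NSC A B E * s)"
    by (simp add: card_coords powers(2) mult_ac)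
  also have "\<dots> \<le> (\<Sum>x\<in>coords m k. card (short_reach x) * s + card (uncovered x))"
    using cover_per_vertex[OF cover f_image] by (rule sum_mono)
  also have "\<dots> = (\<Sum>x\<in>coords m k. card (short_reach x)) * s + (\<Sum>x\<in>coords m k. card (uncovered x))"
    by (simp add: sum.distrib sum_distrib_right)
  also have "\<dots> \<le> (m ^ (k - 2) * card H) * s + (m ^ (k - 2) * m) * card H"
    using sum_short_reach_le[OF m] sum_uncovered_le[OF m in_edge] powers(1)
    by (intro add_mono mult_le_mono1) auto
  also have "\<dots> \<le> ?c * (2 * card H)" using m_le_s by (simp add: algebra_simps)
  finally have "?c * (OPT_NSC A B E * m ^ 2) \<le> ?c * (2 * card H)" .
  moreover have "0 < ?c" using m m_le_s by simp
  ultimately show ?thesis by (meson mult_le_cancel1)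
qed

end

context butterfly
begin

text \<open>Shortcuts for a set cover C: every vertex of layer k-1 gets an edge to each vertex w of
  layer k+1 with f w \<in> C that it can reach (i.e. that agrees with it on the first k-2 coordinates).\<close>
definition shortcuts :: "nat set \<Rightarrow> (bvert \<times> bvert) set" where
  "shortcuts C = {(Lay y (k - 1), Lay w (Suc k)) | y w. y \<in> coords m k \<and> w \<in> coords m k \<and>
     f w \<in> C \<and> (\<forall>t<k - 2. y ! t = w ! t)}"

text \<open>A butterfly edge is determined by its tail, its layer and the new value of the changed
  coordinate, so there are at most m^k k m of them.\<close>
lemma butterfly_edges_image:
  "butterfly_edges \<subseteq> (\<lambda>(u, i, t). (Lay u i, Lay (u[i - 1 := t]) (Suc i))) ` (coords m k \<times> {1..k} \<times> {..<m})"
proof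
  fix e assume "e \<in> butterfly_edges"
  then obtain u v i where e: "e = (Lay u i, Lay v (Suc i))" "u \<in> coords m k" "v \<in> coords m k" "1 \<le> i"
      "i \<le> k" "\<forall>j<k. j \<noteq> i - 1 \<longrightarrow> u ! j = v ! j"
    unfolding butterfly_edges_def by blast
  have "v = u[i - 1 := v ! (i - 1)]"
    using e coordsD by (intro nth_equalityI) (auto simp: nth_list_update)
  moreover have "v ! (i - 1) < m" using coords_nth_less e by simp
  ultimately show "e \<in> (\<lambda>(u, i, t). (Lay u i, Lay (u[i - 1 := t]) (Suc i))) ` (coords m k \<times> {1..k} \<times> {..<m})"
    using e by (intro image_eqI[of _ _ "(u, i, v ! (i - 1))"]) auto
qed

lemma finite_butterfly_edges: "finite butterfly_edges"
  by (rule finite_subset[OF butterfly_edges_image]) (simp add: finite_coords)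

lemma card_butterfly_edges: "card butterfly_edges \<le> m ^ k * k * m"
proof -
  have "card butterfly_edges \<le> card (coords m k \<times> {1..k} \<times> {..<m})"
    using card_mono[OF _ butterfly_edges_image] card_image_le le_trans
    by (metis (no_types, lifting) finite_SigmaI finite_atLeastAtMost finite_coords finite_imageI finite_lessThan)
  then show ?thesis by (simp add: card_cartesian_product card_coords)
qed

text \<open>The edges into B correspond injectively (via f) to edges of the set cover instance.\<close>
lemma cover_edges_image:
  "cover_edges = (\<lambda>(u, b). (Lay u (Suc k), BV b)) ` {(u, b) \<in> coords m k \<times> B. (f u, b) \<in> E}"
  unfolding cover_edges_def by auto

lemma card_cover_edges:
  assumes f: "inj_on f (coords m k)" and E: "finite E"
  shows "finite cover_edges" and "card cover_edges \<le> card E"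
proof -
  let ?P = "{(u, b) \<in> coords m k \<times> B. (f u, b) \<in> E}" and ?g = "\<lambda>(u, b). (f u, b)"
  have inj: "inj_on ?g ?P" using f by (auto simp: inj_on_def)
  have sub: "?g ` ?P \<subseteq> E" by auto
  have finite_P: "finite ?P" using finite_imageD[OF finite_subset[OF sub E] inj] .
  show "finite cover_edges" unfolding cover_edges_image using finite_P by simp
  have "card cover_edges \<le> card ?P" unfolding cover_edges_image using finite_P by (rule card_image_le)
  also have "\<dots> \<le> card E" using card_inj_on_le[OF inj sub E] .
  finally show "card cover_edges \<le> card E" .
qed

text \<open>A shortcut is determined by its head w (with f w \<in> C) and the last two coordinates of its
  tail, so there are at most |C| m^2 of them.\<close>
lemma shortcuts_image:
  assumes k: "k \<ge> 2"
  shows "shortcuts C \<subseteq> (\<lambda>(w, t1, t2). (Lay (w[k - 2 := t1, k - 1 := t2]) (k - 1), Lay w (Suc k))) `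
                         ({w \<in> coords m k. f w \<in> C} \<times> {..<m} \<times> {..<m})"
proof
  fix e assume "e \<in> shortcuts C"
  then obtain y w where e: "e = (Lay y (k - 1), Lay w (Suc k))" "y \<in> coords m k" "w \<in> coords m k"
      "f w \<in> C" "\<forall>t<k - 2. y ! t = w ! t"
    unfolding shortcuts_def by blast
  have len: "length y = k" "length w = k" using e coordsD by auto
  have "y = w[k - 2 := y ! (k - 2), k - 1 := y ! (k - 1)]"
  proof (rule nth_equalityI)
    fix t assume "t < length y"
    then show "y ! t = w[k - 2 := y ! (k - 2), k - 1 := y ! (k - 1)] ! t" using len e(5) k
      by (cases "t = k - 1"; cases "t = k - 2") (auto simp: nth_list_update)
  qed (use len in simp)
  moreover have "y ! (k - 2) < m" "y ! (k - 1) < m" using coords_nth_less[OF e(2)] k by auto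
  ultimately show "e \<in> (\<lambda>(w, t1, t2). (Lay (w[k - 2 := t1, k - 1 := t2]) (k - 1), Lay w (Suc k))) `
                         ({w \<in> coords m k. f w \<in> C} \<times> {..<m} \<times> {..<m})"
    using e by (intro image_eqI[of _ _ "(w, y ! (k - 2), y ! (k - 1))"]) auto
qed

lemma card_shortcuts:
  assumes k: "k \<ge> 2" and f: "inj_on f (coords m k)" and C: "finite C"
  shows "finite (shortcuts C)" and "card (shortcuts C) \<le> card C * m ^ 2"
proof -
  let ?W = "{w \<in> coords m k. f w \<in> C}"
  have finite_W: "finite ?W" by (simp add: finite_coords)
  show "finite (shortcuts C)" by (rule finite_subset[OF shortcuts_image[OF k]]) (simp add: finite_W)
  have "card (shortcuts C) \<le> card (?W \<times> {..<m} \<times> {..<m})"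
    using card_mono[OF _ shortcuts_image[OF k]] card_image_le le_trans
    by (metis (no_types, lifting) finite_SigmaI finite_W finite_imageI finite_lessThan)
  also have "\<dots> = card ?W * m ^ 2" by (simp add: card_cartesian_product power2_eq_square)
  also have "\<dots> \<le> card C * m ^ 2"
    using card_inj_on_le[of f ?W C] f C by (auto simp: inj_on_def)
  finally show "card (shortcuts C) \<le> card C * m ^ 2" .
qed

text \<open>Shortcuts replace two-edge butterfly paths, so they lie in the transitive closure of G.\<close>
lemma shortcuts_sub_trancl:
  assumes k: "k \<ge> 2"
  shows "shortcuts C \<subseteq> G\<^sup>+"
proof
  fix e assume "e \<in> shortcuts C"
  then obtain y w where e: "e = (Lay y (k - 1), Lay w (Suc k))" "y \<in> coords m k" "w \<in> coords m k"
      "\<forall>t<k - 2. y ! t = w ! t"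
    unfolding shortcuts_def by blast
  have "(Lay y (k - 1), Lay w (k - 1 + 2)) \<in> butterfly_edges ^^ 2"
    by (rule butterfly_path_exists[OF e(2) e(3)]) (use k e(4) in auto)
  moreover have "k - 1 + 2 = Suc k" using k by simp
  ultimately have "(Lay y (k - 1), Lay w (Suc k)) \<in> G ^^ 2"
    using relpow_mono_set[of butterfly_edges G 2] G_eq by auto
  then show "e \<in> G\<^sup>+" unfolding e(1) trancl_power by (intro exI[of _ 2]) simp
qed

lemma long_path_ends:
  assumes path: "(s, t) \<in> G ^^ n" and long: "k < n"
  obtains x b where "s = Lay x 1" "x \<in> coords m k" "t = BV b" "b \<in> B"
proof -
  obtain n' where n': "n = Suc n'" using long by (cases n) auto
  obtain y where first: "(s, y) \<in> G" using path n' by (meson relpow_Suc_D2)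
  obtain r where last: "(r, t) \<in> G" using path n' by (meson relpow_Suc_E)
  have layers: "layer t = layer s + n" "layer t \<le> Suc (Suc k)"
    using layer_relpow[OF path] layer_edge_le[OF last] by auto
  have bottom: "s = Lay x 1" if "s = Lay x i" "1 \<le> i" for x i
    using that layers long by simp
  obtain x where s: "s = Lay x 1" "x \<in> coords m k"
    using first
  proof (cases rule: G_cases)
    case (butterfly u v i) then show thesis using that[OF bottom[OF butterfly(1,5)]] by simp
  next
    case (cover u b) then show thesis using that[OF bottom[OF cover(1)]] by simp
  qed
  from last obtain b where "t = BV b" "b \<in> B"
  proof (cases rule: G_cases)
    case (butterfly u v i) then show thesis using layers long s by simp
  next
    case (cover u b) then show thesis using that by simp
  qed
  then show thesis using that s by blast
qed

text \<open>A path
  from (x,1) to b \<in> B is replaced by k-2 butterfly edges to the vertex (y,k-1) that agrees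
  with a cover vertex w on its first k-2 coordinates and with x elsewhere, one shortcut to
  (w,k+1) and the edge from (w,k+1) to b.\<close>
lemma spanner_with_shortcuts:
  assumes k: "k \<ge> 2" and C: "C \<subseteq> f ` coords m k" "\<forall>b\<in>B. \<exists>a\<in>C. (a, b) \<in> E"
  shows "is_tc_spanner G k (G \<union> shortcuts C)"
proof -
  let ?H = "G \<union> shortcuts C"
  have "\<exists>j\<le>k. (s, t) \<in> ?H ^^ j" if reach: "(s, t) \<in> G\<^sup>*" for s t
  proof -
  obtain n where path: "(s, t) \<in> G ^^ n" using reach by (auto simp: rtrancl_power)
  show ?thesis
  proof (cases "n \<le> k")
    case True then show ?thesis using path relpow_mono_set[of G ?H n] by blast
  next
    case False
    then have "k < n" by simp
    then obtain x b where x: "s = Lay x 1" "x \<in> coords m k" and b: "t = BV b" "b \<in> B"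
      by (rule long_path_ends[OF path])
    obtain w where w: "w \<in> coords m k" "f w \<in> C" "(f w, b) \<in> E" using C b by blast
    define y where "y = take (k - 2) w @ drop (k - 2) x"
    have len: "length x = k" "length w = k" using x w coordsD by auto
    have y: "y \<in> coords m k" using len x(2) w(1) unfolding y_def coords_def
      by (auto dest: in_set_takeD in_set_dropD)
    have y_x: "y ! t = x ! t" if "k - 2 \<le> t" "t < k" for t
      unfolding y_def using that len by (simp add: nth_append)
    have y_w: "y ! t = w ! t" if "t < k - 2" for t
      unfolding y_def using that len by (simp add: nth_append)
    have "(Lay x 1, Lay y (1 + (k - 2))) \<in> butterfly_edges ^^ (k - 2)"
      by (rule butterfly_path_exists[OF x(2) y]) (use k y_x in auto)
    moreover have "1 + (k - 2) = k - 1" using k by simp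
    ultimately have "(s, Lay y (k - 1)) \<in> ?H ^^ (k - 2)"
      using relpow_mono_set[of butterfly_edges ?H "k - 2"] G_eq x(1) by auto
    moreover have "(Lay y (k - 1), Lay w (Suc k)) \<in> ?H"
      unfolding shortcuts_def using w y y_w by auto
    moreover have "(Lay w (Suc k), t) \<in> ?H" using w b G_eq unfolding cover_edges_def by auto
    ultimately have "(s, t) \<in> ?H ^^ Suc (Suc (k - 2))" by (intro relpow_Suc_I)
    moreover have "Suc (Suc (k - 2)) = k" using k by simp
    ultimately show ?thesis by auto
  qed
  qed
  then show ?thesis unfolding is_tc_spanner_def using shortcuts_sub_trancl[OF k] by auto
qed

theorem spanner_upper_bound:
  assumes k: "k \<ge> 2" and f: "bij_betw f (coords m k) A" and E: "finite E"
    and C: "C \<subseteq> A" "\<forall>b\<in>B. \<exists>a\<in>C. (a, b) \<in> E"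
  obtains H where "finite H" "is_tc_spanner G k H" "card H \<le> m ^ k * k * m + card E + card C * m ^ 2"
proof
  have inj: "inj_on f (coords m k)" and image: "f ` coords m k = A" using f by (auto simp: bij_betw_def)
  have finite_C: "finite C" using C(1) image finite_coords by (metis finite_imageI finite_subset)
  show "is_tc_spanner G k (G \<union> shortcuts C)" using spanner_with_shortcuts[OF k] C image by simp
  show "finite (G \<union> shortcuts C)"
    using finite_butterfly_edges card_cover_edges(1)[OF inj E] card_shortcuts(1)[OF k inj finite_C]
    by (simp add: G_eq)
  have "card (G \<union> shortcuts C) \<le> card butterfly_edges + card cover_edges + card (shortcuts C)"
    unfolding G_eq
    using card_Un_le[of "butterfly_edges \<union> cover_edges" "shortcuts C"]
      card_Un_le[of butterfly_edges cover_edges] by linarith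
  also have "\<dots> \<le> m ^ k * k * m + card E + card C * m ^ 2"
    using card_butterfly_edges card_cover_edges(2)[OF inj E] card_shortcuts(2)[OF k inj finite_C]
    by (intro add_mono)
  finally show "card (G \<union> shortcuts C) \<le> m ^ k * k * m + card E + card C * m ^ 2" .
qed

end

lemma powr_of_power:
  assumes "m \<ge> 1" "k \<ge> 1"
  shows "real (m ^ k) powr r = real m powr (real k * r)"
  using assms by (simp add: powr_realpow[symmetric] powr_powr)

lemma nice_set_cover_blocks:
  assumes m: "m \<ge> 1" and k: "k \<ge> 1"
    and nice: "nice_set_cover A B E (real (m ^ k)) (real (m ^ k) powr (1 + 3 / (2 * real k)))
                 (real (m ^ k) powr (1 / (5 * real k)))"
    and covered: "\<forall>b\<in>B. \<exists>a\<in>A. (a, b) \<in> E"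
  obtains Bl s where "block_cover A B E Bl (m ^ k) s" "card A = m ^ k" "real s = real m powr (3 / 2)"
    "\<And>a. a \<in> A \<Longrightarrow> real (card {i. i < m ^ k \<and> (\<exists>b\<in>Bl i. (a, b) \<in> E)}) \<le> real m powr (1 / 5)"
proof -
  have kpos: "real k > 0" using k by simp
  have block_size: "real (m ^ k) powr (1 + 3 / (2 * real k)) / real (m ^ k) = real m powr (3 / 2)"
  proof -
    have exponent: "real k * (1 + 3 / (2 * real k)) = real k + 3 / 2" using kpos by (simp add: field_simps)
    have "real (m ^ k) powr (1 + 3 / (2 * real k)) = real m powr (real k + 3 / 2)"
      unfolding powr_of_power[OF m k] exponent ..
    also have "\<dots> = real m powr real k * real m powr (3 / 2)" by (rule powr_add)
    finally have "real (m ^ k) powr (1 + 3 / (2 * real k)) = real m powr real k * real m powr (3 / 2)" .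
    moreover have "real m powr real k = real (m ^ k)" using m by (simp add: powr_realpow)
    ultimately show ?thesis using m by simp
  qed
  have degree: "real (m ^ k) powr (1 / (5 * real k)) = real m powr (1 / 5)"
    using powr_of_power[OF m k] kpos by simp
  from nice[unfolded nice_set_cover_def block_size degree] obtain Bl where
    A: "finite A" "card A = m ^ k" and E: "E \<subseteq> A \<times> B"
    and blocks: "\<forall>i<m ^ k. Bl i \<subseteq> B \<and> real (card (Bl i)) = real m powr (3 / 2)"
    and disjoint: "\<forall>i<m ^ k. \<forall>j<m ^ k. i \<noteq> j \<longrightarrow> Bl i \<inter> Bl j = {}"
    and union: "(\<Union>i<m ^ k. Bl i) = B"
    and all_or_nothing: "\<forall>v\<in>A. \<forall>i<m ^ k. (\<exists>b\<in>Bl i. (v, b) \<in> E) \<longrightarrow> (\<forall>b\<in>Bl i. (v, b) \<in> E)"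
    and degrees: "\<forall>v\<in>A. real (card {i. i < m ^ k \<and> (\<exists>b\<in>Bl i. (v, b) \<in> E)}) \<le> real m powr (1 / 5)"
    by (auto simp only: of_nat_eq_iff)
  define s where "s = card (Bl 0)"
  have s: "real s = real m powr (3 / 2)" using blocks m unfolding s_def by simp
  have "block_cover A B E Bl (m ^ k) s"
  proof
    show "\<And>i. i < m ^ k \<Longrightarrow> card (Bl i) = s" using blocks s by (metis of_nat_eq_iff)
    have "real m powr (3 / 2) > 0" using m by simp
    then show "0 < s" unfolding s[symmetric] by simp
  qed (use A E blocks disjoint union all_or_nothing covered in blast)+
  then show thesis using that A(2) s degrees by blast
qed

lemma exponent_bounds:
  assumes "m \<ge> (1::real)"
  shows "m powr (1 / 5) \<le> m" "m \<le> m powr (3 / 2)"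
    "m powr (1 / 5) * m powr (1 / 5) * m powr (3 / 2) \<le> m ^ 2"
proof -
  show "m powr (1 / 5) \<le> m" "m \<le> m powr (3 / 2)"
    using powr_mono[of "1 / 5" 1 m] powr_mono[of 1 "3 / 2" m] assms by simp_all
  have "m powr (1 / 5) * m powr (1 / 5) * m powr (3 / 2) = m powr (1 / 5 + 1 / 5 + 3 / 2)"
    by (simp only: powr_add)
  also have "\<dots> \<le> m powr 2" using assms by (intro powr_mono) auto
  finally show "m powr (1 / 5) * m powr (1 / 5) * m powr (3 / 2) \<le> m ^ 2" using assms by simp
qed

text \<open>Lower bound for the instances of the theorem: OPT * m^2 / 2 \<le> S_k(G), by applying
  spanner_lower_bound to an optimal spanner (one exists by the upper-bound construction).\<close>
theorem butterfly_spanner_lower: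
  assumes k: "k \<ge> 2" and m: "m \<ge> 1"
    and nice: "nice_set_cover A B E (real (m ^ k)) (real (m ^ k) powr (1 + 3 / (2 * real k)))
                 (real (m ^ k) powr (1 / (5 * real k)))"
    and covered: "\<forall>b\<in>B. \<exists>a\<in>A. (a, b) \<in> E" and f: "bij_betw f (coords m k) A"
  shows "1 / 2 * real (OPT_NSC A B E) * real m ^ 2 \<le> real (S_k k (nsc_butterfly_graph m k f B E))"
proof -
  have k_pos: "k \<ge> 1" using k by simp
  obtain Bl s where cover: "block_cover A B E Bl (m ^ k) s" and s: "real s = real m powr (3 / 2)"
    using nice_set_cover_blocks[OF m k_pos nice covered] by blast
  interpret butterfly m k f B E .
  have m_le_s: "m \<le> s" using exponent_bounds(2)[of "real m"] m s by simp
  obtain C where C: "C \<subseteq> A" "\<forall>b\<in>B. \<exists>a\<in>C. (a, b) \<in> E"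
    using OPT_NSC_attained covered by blast
  obtain H where "finite H" "is_tc_spanner G k H"
    using spanner_upper_bound[OF k f block_cover.finite_E[OF cover] C] by blast
  then obtain H0 where H0: "finite H0" "is_tc_spanner G k H0" "card H0 = S_k k G"
    by (rule S_k_attained)
  interpret optimal: butterfly_spanner m k f B E H0 using H0 by unfold_locales
  have "OPT_NSC A B E * m ^ 2 \<le> 2 * S_k k G"
    using optimal.spanner_lower_bound[OF cover f m k m_le_s] H0(3) by simp
  then have "real (OPT_NSC A B E * m ^ 2) \<le> real (2 * S_k k G)" by (simp only: of_nat_le_iff)
  then show ?thesis by simp
qed

text \<open>Upper bound for the instances of the theorem: S_k(G) \<le> (k+2) * OPT * m^2, since the three
  parts m^k k m, |E| and OPT m^2 of the shortcut spanner are each O(OPT m^2).\<close>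
theorem butterfly_spanner_upper:
  assumes k: "k \<ge> 2" and m: "m \<ge> 1"
    and nice: "nice_set_cover A B E (real (m ^ k)) (real (m ^ k) powr (1 + 3 / (2 * real k)))
                 (real (m ^ k) powr (1 / (5 * real k)))"
    and covered: "\<forall>b\<in>B. \<exists>a\<in>A. (a, b) \<in> E" and f: "bij_betw f (coords m k) A"
  shows "real (S_k k (nsc_butterfly_graph m k f B E)) \<le> (real k + 2) * real (OPT_NSC A B E) * real m ^ 2"
proof -
  have k_pos: "k \<ge> 1" using k by simp
  obtain Bl s where cover: "block_cover A B E Bl (m ^ k) s" and card_A: "card A = m ^ k"
    and s: "real s = real m powr (3 / 2)"
    and degree: "\<And>a. a \<in> A \<Longrightarrow> real (card {i. i < m ^ k \<and> (\<exists>b\<in>Bl i. (a, b) \<in> E)}) \<le> real m powr (1 / 5)"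
    using nice_set_cover_blocks[OF m k_pos nice covered] by blast
  interpret block_cover A B E Bl "m ^ k" s by (rule cover)
  interpret butterfly m k f B E .
  let ?M = "real m" and ?OPT = "real (OPT_NSC A B E)"
  have exps: "0 \<le> ?M powr (1 / 5)" "?M powr (1 / 5) \<le> ?M"
    "?M powr (1 / 5) * ?M powr (1 / 5) * real s \<le> ?M ^ 2"
    using exponent_bounds[of ?M] m s by auto
  have "\<And>a. a \<in> A \<Longrightarrow> real (card (blocks_of a)) \<le> ?M powr (1 / 5)"
    using degree unfolding blocks_of_def .
  note bounds = blocks_and_edges_le_OPT[OF this exps card_A]
  obtain C where C: "C \<subseteq> A" "\<forall>b\<in>B. \<exists>a\<in>C. (a, b) \<in> E" "card C = OPT_NSC A B E"
    using OPT_NSC_attained covered by blast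
  obtain H where H: "finite H" "is_tc_spanner G k H" "card H \<le> m ^ k * k * m + card E + card C * m ^ 2"
    using spanner_upper_bound[OF k f finite_E C(1,2)] by blast
  have "real (S_k k G) \<le> real (card H)" using S_k_le[OF H(1,2)] by simp
  also have "\<dots> \<le> real k * (real (m ^ k) * ?M) + real (card E) + ?OPT * ?M ^ 2"
    using H(3) C(3) by (simp add: mult_ac flip: of_nat_mult of_nat_add of_nat_power of_nat_le_iff)
  also have "\<dots> \<le> real k * (?OPT * ?M ^ 2) + ?OPT * ?M ^ 2 + ?OPT * ?M ^ 2"
    using bounds by (intro add_mono mult_left_mono) auto
  also have "\<dots> = (real k + 2) * ?OPT * ?M ^ 2" by (simp add: algebra_simps)
  finally show ?thesis .
qed

corollary butterfly_spanner_bounds_in_n: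
  assumes k: "k \<ge> 2" and n: "n = m ^ k" "n \<ge> 1"
    and nice: "nice_set_cover A B E (real n) (real n powr (1 + 3 / (2 * real k)))
                 (real n powr (1 / (5 * real k)))"
    and covered: "\<forall>b\<in>B. \<exists>a\<in>A. (a, b) \<in> E" and f: "bij_betw f (coords m k) A"
  shows "1 / 2 * real (OPT_NSC A B E) * real n powr (2 / real k)
           \<le> real (S_k k (nsc_butterfly_graph m k f B E)) \<and>
         real (S_k k (nsc_butterfly_graph m k f B E))
           \<le> (real k + 2) * real (OPT_NSC A B E) * real n powr (2 / real k)"
proof -
  have m: "m \<ge> 1"
  proof (rule ccontr)
    assume "\<not> m \<ge> 1"
    then have "n = 0" using n(1) k by (simp add: zero_power)
    then show False using n(2) by simp
  qed
  have "real n powr (2 / real k) = real m ^ 2"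
    using powr_of_power[OF m, of k "2 / real k"] k n by (simp add: powr_realpow)
  then show ?thesis using butterfly_spanner_lower[OF k m] butterfly_spanner_upper[OF k m] nice covered f n
    by simp
qed

theorem mainTheorem10:
  fixes k :: nat
  assumes "k \<ge> 2"
  shows "\<exists>c1 c2 :: real. \<exists>N :: nat. c1 > 0 \<and> c2 > 0 \<and>
    (\<forall>(m::nat) (n::nat) (A::nat set) (B::nat set) (E::(nat \<times> nat) set) (f::nat list \<Rightarrow> nat).
       n = m ^ k \<and> n \<ge> N \<and>
       nice_set_cover A B E (real n) (real n powr (1 + 3 / (2 * real k)))
                                     (real n powr (1 / (5 * real k))) \<and>
       (\<forall>b\<in>B. \<exists>a\<in>A. (a, b) \<in> E) \<and>
       bij_betw f (coords m k) A
     \<longrightarrow>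
       c1 * real (OPT_NSC A B E) * real n powr (2 / real k)
         \<le> real (S_k k (nsc_butterfly_graph m k f B E)) \<and>
       real (S_k k (nsc_butterfly_graph m k f B E))
         \<le> c2 * real (OPT_NSC A B E) * real n powr (2 / real k))"
  using butterfly_spanner_bounds_in_n[OF assms]
  by (intro exI[of _ "1 / 2"] exI[of _ "real k + 2"] exI[of _ 1]) auto

end
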